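(* Let $(y_i)_{i\in\mathbb{Z}}$ be independent indeterminates. Define rational functions $y_i^{(j)}$ for $i\in\mathbb{Z}$, $j\ge -1$ by $y_i^{(-1)}=y_i^{(0)}=y_i$ and, for $j\ge1$, $$y_i^{(j)}=\frac{y_{i-1}^{(j-1)}\,y_{i+1}^{(j-1)}+1}{y_i^{(j-2)}}.$$ Then for all $i\in\mathbb{Z}$ and $j\ge1$, $$y_i^{(j)}=\frac{P(\tilde T_{i-j+1}\cup\tilde T_{i-j+2}\cup\dots\cup\tilde T_{i+j-1})}{y_{i-j+1}y_{i-j+2}\cdots y_{i+j-1}},$$ where $\tilde T_{i-j+1}\cup\dots\cup\tilde T_{i+j-1}$ denotes the ladder graph of the $2j-1$ tiles $\tilde T_{i-j+1},\dots,\tilde T_{i+j-1}$ in this order.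
   Context: For $k\in\mathbb{Z}$, the tile $\tilde T_k$ is a square whose northern edge has weight $y_{k+1}$, southern edge weight $y_{k-1}$, and eastern and western edges weight $1$. The ladder graph of a tile sequence $S_1,\dots,S_m$ (tile $S_k$ with north weight $a_k$, south weight $b_k$) is the graph obtained by gluing the squares in a row (east edge of $S_k$ identified with west edge of $S_{k+1}$): vertices $u_0,\dots,u_m,v_0,\dots,v_m$, edges $u_{k-1}u_k$ of weight $a_k$, $v_{k-1}v_k$ of weight $b_k$ ($1\le k\le m$), and $u_kv_k$ of weight $1$ ($0\le k\le m$). For a weighted graph $G$, $P(G)=\sum_M\prod_{e\in M}w_e$, summed over all perfect matchings $M$ of $G$. *)

theory Defs
  imports Main
begin

definition perfect_matchings :: "'v set \<Rightarrow> 'e set \<Rightarrow> ('e \<Rightarrow> 'v set) \<Rightarrow> 'e set set" where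
  "perfect_matchings V E ends = {M. M \<subseteq> E \<and> (\<forall>v\<in>V. \<exists>!e. e \<in> M \<and> v \<in> ends e)}"

definition matching_sum :: "'v set \<Rightarrow> 'e set \<Rightarrow> ('e \<Rightarrow> 'v set) \<Rightarrow> ('e \<Rightarrow> 'a::comm_semiring_1) \<Rightarrow> 'a" where
  "matching_sum V E ends w = (\<Sum>M\<in>perfect_matchings V E ends. \<Prod>e\<in>M. w e)"

datatype lvert = U nat | V nat
datatype ledge = Top nat | Bot nat | Rung nat

definition ladder_verts :: "nat \<Rightarrow> lvert set" where
  "ladder_verts m = U ` {0..m} \<union> V ` {0..m}"

definition ladder_edges :: "nat \<Rightarrow> ledge set" where
  "ladder_edges m = Top ` {1..m} \<union> Bot ` {1..m} \<union> Rung ` {0..m}"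

fun ladder_ends :: "ledge \<Rightarrow> lvert set" where
  "ladder_ends (Top k) = {U (k - 1), U k}"
| "ladder_ends (Bot k) = {V (k - 1), V k}"
| "ladder_ends (Rung k) = {U k, V k}"

fun ladder_weight :: "(nat \<Rightarrow> 'a) \<Rightarrow> (nat \<Rightarrow> 'a) \<Rightarrow> ledge \<Rightarrow> 'a::one" where
  "ladder_weight a b (Top k) = a k"
| "ladder_weight a b (Bot k) = b k"
| "ladder_weight a b (Rung k) = 1"

text \<open>P of the ladder graph of tiles S_1..S_m, with S_k having north weight a k and
  south weight b k.\<close>
definition ladder_P :: "nat \<Rightarrow> (nat \<Rightarrow> 'a::comm_semiring_1) \<Rightarrow> (nat \<Rightarrow> 'a) \<Rightarrow> 'a" where
  "ladder_P m a b = matching_sum (ladder_verts m) (ladder_edges m) ladder_ends (ladder_weight a b)"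

text \<open>ysh y i n = y_i^{(n-1)}, i.e. the superscript is shifted by one so that it is a nat.\<close>
fun ysh :: "(int \<Rightarrow> 'a::field) \<Rightarrow> int \<Rightarrow> nat \<Rightarrow> 'a" where
  "ysh y i 0 = y i"
| "ysh y i (Suc 0) = y i"
| "ysh y i (Suc (Suc n)) = (ysh y (i - 1) (Suc n) * ysh y (i + 1) (Suc n) + 1) / ysh y i n"

end

theory Submission
  imports Defs
begin

text \<open>Expanding the perfect matchings of a ladder at its last top vertex shows that P of the
  ladder of m tiles satisfies the continuant recurrence P(m+2) = P(m+1) + a(m+2) b(m+2) P(m).
  Dividing by y(a+1)...y(a+m) turns it into the rational recurrence defining ncont.
  The sequences n \<mapsto> ncont y a (n + 2) and ncont y (a + 2) satisfy one common second-order
  linear recurrence, so their Casoratian is an explicit signed product; this gives the exchange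
  relation ncont y a (k+4) ncont y (a+2) k - ncont y a (k+2) ncont y (a+2) (k+2) = (-1)^k,
  which for even k is the recurrence defining the y_i^(j).\<close>

lemma perfect_matchings_empty: "perfect_matchings {} {} ends = {{}}"
  by (auto simp: perfect_matchings_def)

lemma matching_sum_empty: "matching_sum {} {} ends w = 1"
  by (simp add: matching_sum_def perfect_matchings_empty)

lemma perfect_matchings_split_at_vertex:
  assumes v: "v \<in> Vs" and ends: "\<forall>e\<in>E. ends e \<subseteq> Vs"
  shows "perfect_matchings Vs E ends =
    (\<Union>e\<in>{e\<in>E. v \<in> ends e}. insert e ` perfect_matchings (Vs - ends e) {f\<in>E. ends f \<inter> ends e = {}} ends)"
    (is "_ = (\<Union>e\<in>?S. insert e ` ?P e)")
proof
  show "perfect_matchings Vs E ends \<subseteq> (\<Union>e\<in>?S. insert e ` ?P e)"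
  proof
    fix M assume "M \<in> perfect_matchings Vs E ends"
    then have ME: "M \<subseteq> E" and cov: "\<forall>u\<in>Vs. \<exists>!f. f \<in> M \<and> u \<in> ends f"
      by (auto simp: perfect_matchings_def)
    obtain e where e: "e \<in> M" "v \<in> ends e" using cov v by blast
    have "ends f \<inter> ends e = {}" if "f \<in> M - {e}" for f
    proof (rule ccontr)
      assume "ends f \<inter> ends e \<noteq> {}"
      then obtain u where "u \<in> ends f" "u \<in> ends e" by auto
      moreover have "u \<in> Vs" using \<open>u \<in> ends e\<close> e(1) ME ends by auto
      ultimately show False using cov that e(1) by blast
    qed
    moreover have "\<exists>!f. f \<in> M - {e} \<and> u \<in> ends f" if "u \<in> Vs - ends e" for u
      using cov that by (metis DiffD1 DiffD2 DiffI singletonD)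
    ultimately have "M - {e} \<in> ?P e" using ME by (auto simp: perfect_matchings_def)
    moreover have "e \<in> ?S" using e ME by auto
    ultimately show "M \<in> (\<Union>e\<in>?S. insert e ` ?P e)" using e(1) by (auto intro!: image_eqI[of M _ "M - {e}"])
  qed
next
  show "(\<Union>e\<in>?S. insert e ` ?P e) \<subseteq> perfect_matchings Vs E ends"
  proof clarify
    fix e M assume e: "e \<in> E" "v \<in> ends e" and M: "M \<in> ?P e"
    have "\<exists>!f. f \<in> insert e M \<and> u \<in> ends f" if "u \<in> Vs" for u
    proof (cases "u \<in> ends e")
      case True
      then show ?thesis using M by (auto simp: perfect_matchings_def)
    next
      case False
      then have "\<exists>!f. f \<in> M \<and> u \<in> ends f" using M that by (auto simp: perfect_matchings_def)
      then show ?thesis using False by (metis insert_iff)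
    qed
    then show "insert e M \<in> perfect_matchings Vs E ends" using e M by (auto simp: perfect_matchings_def)
  qed
qed

lemma matching_sum_split_at_vertex:
  assumes fin: "finite E" and v: "v \<in> Vs" and ends: "\<forall>e\<in>E. ends e \<subseteq> Vs"
  shows "matching_sum Vs E ends w =
    (\<Sum>e\<in>{e\<in>E. v \<in> ends e}. w e * matching_sum (Vs - ends e) {f\<in>E. ends f \<inter> ends e = {}} ends w)"
proof -
  define S where "S = {e\<in>E. v \<in> ends e}"
  define P where "P e = perfect_matchings (Vs - ends e) {f\<in>E. ends f \<inter> ends e = {}} ends" for e
  have P_Pow: "P e \<subseteq> Pow {f\<in>E. f \<noteq> e}" if "e \<in> S" for e
    using that by (auto simp: P_def S_def perfect_matchings_def)
  have fin_P: "finite (P e)" and fin_M: "M \<in> P e \<Longrightarrow> finite M" and e_notin: "M \<in> P e \<Longrightarrow> e \<notin> M"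
    if "e \<in> S" for e M
    using P_Pow[OF that] fin by (auto intro: finite_subset)
  have disjoint: "insert e ` P e \<inter> insert e' ` P e' = {}" if "e \<in> S" "e' \<in> S" "e \<noteq> e'" for e e'
  proof -
    have "X \<notin> perfect_matchings Vs E ends" if "e \<in> X" "e' \<in> X" for X
      using \<open>e \<in> S\<close> \<open>e' \<in> S\<close> \<open>e \<noteq> e'\<close> v that unfolding S_def perfect_matchings_def by blast
    moreover have "insert e ` P e \<union> insert e' ` P e' \<subseteq> perfect_matchings Vs E ends"
      using perfect_matchings_split_at_vertex[OF v ends] that by (auto simp: S_def P_def)
    ultimately show ?thesis by blast
  qed
  have "matching_sum Vs E ends w = (\<Sum>e\<in>S. \<Sum>M\<in>insert e ` P e. \<Prod>x\<in>M. w x)"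
    unfolding matching_sum_def perfect_matchings_split_at_vertex[OF v ends] S_def[symmetric] P_def[symmetric]
    by (rule sum.UNION_disjoint) (use fin fin_P disjoint in \<open>auto simp: S_def P_def\<close>)
  also have "\<dots> = (\<Sum>e\<in>S. w e * (\<Sum>M\<in>P e. \<Prod>x\<in>M. w x))"
  proof (rule sum.cong[OF refl])
    fix e assume e: "e \<in> S"
    have "inj_on (insert e) (P e)"
      by (rule inj_onI) (metis e e_notin insert_ident)
    then have "(\<Sum>M\<in>insert e ` P e. \<Prod>x\<in>M. w x) = (\<Sum>M\<in>P e. \<Prod>x\<in>insert e M. w x)"
      by (simp add: sum.reindex)
    also have "\<dots> = w e * (\<Sum>M\<in>P e. \<Prod>x\<in>M. w x)"
      using fin_M[OF e] e_notin[OF e] by (simp add: sum_distrib_left)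
    finally show "(\<Sum>M\<in>insert e ` P e. \<Prod>x\<in>M. w x) = w e * (\<Sum>M\<in>P e. \<Prod>x\<in>M. w x)" .
  qed
  finally show ?thesis by (simp add: S_def P_def matching_sum_def)
qed

lemma finite_ladder_edges: "finite (ladder_edges m)"
  by (simp add: ladder_edges_def)

lemma ladder_ends_subset: "\<forall>e\<in>ladder_edges m. ladder_ends e \<subseteq> ladder_verts m"
  by (auto simp: ladder_edges_def ladder_verts_def)

lemma ladder_P_expand:
  assumes "v \<in> ladder_verts m" and "{e\<in>ladder_edges m. v \<in> ladder_ends e} = S"
  shows "ladder_P m a b = (\<Sum>e\<in>S. ladder_weight a b e *
    matching_sum (ladder_verts m - ladder_ends e) {f\<in>ladder_edges m. ladder_ends f \<inter> ladder_ends e = {}}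
      ladder_ends (ladder_weight a b))"
  unfolding ladder_P_def assms(2)[symmetric]
  by (rule matching_sum_split_at_vertex[OF finite_ladder_edges assms(1) ladder_ends_subset])

lemma ladder_P_0: "ladder_P 0 a b = 1"
proof -
  have "U 0 \<in> ladder_verts 0" by (simp add: ladder_verts_def)
  moreover have "{e\<in>ladder_edges 0. U 0 \<in> ladder_ends e} = {Rung 0}"
    by (auto simp: ladder_edges_def)
  ultimately have "ladder_P 0 a b = matching_sum (ladder_verts 0 - ladder_ends (Rung 0))
      {f\<in>ladder_edges 0. ladder_ends f \<inter> ladder_ends (Rung 0) = {}} ladder_ends (ladder_weight a b)"
    by (simp only: ladder_P_expand) simp
  moreover have "ladder_verts 0 - ladder_ends (Rung 0) = {}"
    and "{f\<in>ladder_edges 0. ladder_ends f \<inter> ladder_ends (Rung 0) = {}} = {}"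
    by (auto simp: ladder_verts_def ladder_edges_def)
  ultimately show ?thesis by (simp only: matching_sum_empty)
qed

lemma ladder_verts_Suc_remove_rung: "ladder_verts (Suc n) - {U (Suc n), V (Suc n)} = ladder_verts n"
  by (auto simp: ladder_verts_def image_iff elim: lvert.exhaust)

lemma ladder_edges_Suc_remove_rung:
  "{f\<in>ladder_edges (Suc n). ladder_ends f \<inter> {U (Suc n), V (Suc n)} = {}} = ladder_edges n"
  by (auto simp: ladder_edges_def image_iff elim: ledge.exhaust)

lemma ladder_P_Suc:
  fixes k :: nat
  defines "Q \<equiv> {U k, U (Suc k), V k, V (Suc k)}"
  shows "ladder_P (Suc k) a b = ladder_P k a b + a (Suc k) * b (Suc k) *
    matching_sum (ladder_verts (Suc k) - Q) {f\<in>ladder_edges (Suc k). ladder_ends f \<inter> Q = {}}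
      ladder_ends (ladder_weight a b)"
proof -
  txt \<open>At U (Suc k) either the last rung is matched, leaving the ladder of k tiles, or the last
    top edge is, which forces the last bottom edge.\<close>
  let ?w = "ladder_weight a b"
  define V' where "V' = ladder_verts (Suc k) - {U k, U (Suc k)}"
  define E' where "E' = {f\<in>ladder_edges (Suc k). ladder_ends f \<inter> {U k, U (Suc k)} = {}}"
  have "U (Suc k) \<in> ladder_verts (Suc k)" by (simp add: ladder_verts_def)
  moreover have "{e\<in>ladder_edges (Suc k). U (Suc k) \<in> ladder_ends e} = {Rung (Suc k), Top (Suc k)}"
    by (auto simp: ladder_edges_def)
  ultimately have "ladder_P (Suc k) a b = (\<Sum>e\<in>{Rung (Suc k), Top (Suc k)}. ?w e *
      matching_sum (ladder_verts (Suc k) - ladder_ends e)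
        {f\<in>ladder_edges (Suc k). ladder_ends f \<inter> ladder_ends e = {}} ladder_ends ?w)"
    by (rule ladder_P_expand)
  also have "\<dots> = ?w (Rung (Suc k)) * matching_sum (ladder_verts (Suc k) - ladder_ends (Rung (Suc k)))
        {f\<in>ladder_edges (Suc k). ladder_ends f \<inter> ladder_ends (Rung (Suc k)) = {}} ladder_ends ?w
      + ?w (Top (Suc k)) * matching_sum (ladder_verts (Suc k) - ladder_ends (Top (Suc k)))
        {f\<in>ladder_edges (Suc k). ladder_ends f \<inter> ladder_ends (Top (Suc k)) = {}} ladder_ends ?w"
    by simp
  also have "\<dots> = ladder_P k a b + a (Suc k) * matching_sum V' E' ladder_ends ?w"
    by (simp only: ladder_weight.simps ladder_ends.simps ladder_verts_Suc_remove_rung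
        ladder_edges_Suc_remove_rung diff_Suc_1 mult_1 V'_def E'_def ladder_P_def)
  finally have "ladder_P (Suc k) a b = ladder_P k a b + a (Suc k) * matching_sum V' E' ladder_ends ?w" .
  moreover have "matching_sum V' E' ladder_ends ?w =
    (\<Sum>e\<in>{Bot (Suc k)}. ?w e * matching_sum (V' - ladder_ends e) {f\<in>E'. ladder_ends f \<inter> ladder_ends e = {}}
      ladder_ends ?w)"
  proof -
    have split: "finite E'" "V (Suc k) \<in> V'" "\<forall>e\<in>E'. ladder_ends e \<subseteq> V'"
      using finite_ladder_edges ladder_ends_subset[of "Suc k"]
      by (auto simp: E'_def V'_def ladder_verts_def)
    have "{e\<in>E'. V (Suc k) \<in> ladder_ends e} = {Bot (Suc k)}"
      by (auto simp: E'_def ladder_edges_def)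
    then show ?thesis using matching_sum_split_at_vertex[OF split] by (simp only:)
  qed
  moreover have "V' - ladder_ends (Bot (Suc k)) = ladder_verts (Suc k) - Q"
    and "{f\<in>E'. ladder_ends f \<inter> ladder_ends (Bot (Suc k)) = {}} = {f\<in>ladder_edges (Suc k). ladder_ends f \<inter> Q = {}}"
    by (auto simp: V'_def E'_def Q_def)
  ultimately show ?thesis by (simp add: mult.assoc)
qed

lemma ladder_P_1: "ladder_P 1 a b = 1 + a 1 * b 1"
proof -
  have "ladder_verts (Suc 0) - {U 0, U (Suc 0), V 0, V (Suc 0)} = {}"
    and "{f\<in>ladder_edges (Suc 0). ladder_ends f \<inter> {U 0, U (Suc 0), V 0, V (Suc 0)} = {}} = {}"
    by (auto simp: ladder_verts_def ladder_edges_def)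
  then have "ladder_P (Suc 0) a b = 1 + a (Suc 0) * b (Suc 0)"
    using ladder_P_Suc[of 0 a b] by (simp only: ladder_P_0 matching_sum_empty mult_1_right)
  then show ?thesis by simp
qed

lemma ladder_P_Suc_Suc:
  "ladder_P (Suc (Suc n)) a b = ladder_P (Suc n) a b + a (Suc (Suc n)) * b (Suc (Suc n)) * ladder_P n a b"
proof -
  have "ladder_verts (Suc (Suc n)) - {U (Suc n), U (Suc (Suc n)), V (Suc n), V (Suc (Suc n))} = ladder_verts n"
    by (auto simp: ladder_verts_def image_iff elim: lvert.exhaust)
  moreover have "{f\<in>ladder_edges (Suc (Suc n)).
      ladder_ends f \<inter> {U (Suc n), U (Suc (Suc n)), V (Suc n), V (Suc (Suc n))} = {}} = ladder_edges n"
    by (auto simp: ladder_edges_def image_iff elim: ledge.exhaust)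
  ultimately show ?thesis
    using ladder_P_Suc[of "Suc n" a b] by (simp only: ladder_P_def)
qed

lemma second_order_recurrence_unique:
  assumes "f 0 = g 0" "f 1 = g 1"
    and "\<And>n. f (Suc (Suc n)) = p n * f (Suc n) + q n * f n"
    and "\<And>n. g (Suc (Suc n)) = p n * g (Suc n) + q n * g n"
  shows "f n = g n"
proof -
  have "f n = g n \<and> f (Suc n) = g (Suc n)"
    by (induction n) (use assms in auto)
  then show ?thesis ..
qed

lemma casoratian_Suc:
  fixes x z :: "nat \<Rightarrow> 'a::comm_ring"
  assumes "x (Suc (Suc n)) = p n * x (Suc n) + q n * x n"
    and "z (Suc (Suc n)) = p n * z (Suc n) + q n * z n"
  shows "x (Suc (Suc n)) * z (Suc n) - x (Suc n) * z (Suc (Suc n)) = - q n * (x (Suc n) * z n - x n * z (Suc n))"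
  using assms by (simp add: algebra_simps)

lemma casoratian_skip:
  fixes x z :: "nat \<Rightarrow> 'a::comm_ring"
  assumes "x (Suc (Suc n)) = p n * x (Suc n) + q n * x n"
    and "z (Suc (Suc n)) = p n * z (Suc n) + q n * z n"
  shows "x (Suc (Suc n)) * z n - x n * z (Suc (Suc n)) = p n * (x (Suc n) * z n - x n * z (Suc n))"
  using assms by (simp add: algebra_simps)

text \<open>The two initial values are chosen so that ncont y a 2 = y a and ncont y a 3 = 1; then
  ysh y i n = ncont y (i - n + 1) (2 n) holds from n = 0 on, and ncont y a (m + 3) is P of the
  ladder of m tiles divided by y(a+1)...y(a+m).\<close>
fun ncont :: "(int \<Rightarrow> 'a::field) \<Rightarrow> int \<Rightarrow> nat \<Rightarrow> 'a" where
  "ncont y a 0 = y (a - 1)"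
| "ncont y a (Suc 0) = 0"
| "ncont y a (Suc (Suc n)) = (ncont y a (Suc n) + y (a + int n) * ncont y a n) / y (a + int n - 1)"

lemma ncont_2: "y (a - 1) \<noteq> 0 \<Longrightarrow> ncont y a 2 = y a"
  by (simp add: numeral_eq_Suc)

lemma ncont_3: "y (a - 1) \<noteq> 0 \<Longrightarrow> y a \<noteq> 0 \<Longrightarrow> ncont y a 3 = 1"
  by (simp add: numeral_eq_Suc)

lemma ncont_4: "y (a - 1) \<noteq> 0 \<Longrightarrow> y a \<noteq> 0 \<Longrightarrow> ncont y a 4 = (1 + y (a + 2) * y a) / y (a + 1)"
  by (simp add: numeral_eq_Suc add.commute)

declare ncont.simps(3)[simp del]

lemma ncont_Suc_Suc_linear:
  "ncont y a (Suc (Suc n)) = inverse (y (a + int n - 1)) * ncont y a (Suc n)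
    + y (a + int n) / y (a + int n - 1) * ncont y a n"
  by (simp add: ncont.simps(3) add_divide_distrib divide_inverse_commute algebra_simps)

lemma ncont_shifted_recurrences:
  fixes y :: "int \<Rightarrow> 'a::field" and a :: int
  defines "p \<equiv> \<lambda>n. inverse (y (a + int n + 1))" and "q \<equiv> \<lambda>n. y (a + int n + 2) / y (a + int n + 1)"
  shows "ncont y a (Suc (Suc n) + 2) = p n * ncont y a (Suc n + 2) + q n * ncont y a (n + 2)"
    and "ncont y (a + 2) (Suc (Suc n)) = p n * ncont y (a + 2) (Suc n) + q n * ncont y (a + 2) n"
  using ncont_Suc_Suc_linear[of y a "n + 2"] ncont_Suc_Suc_linear[of y "a + 2" n]
  by (simp_all add: p_def q_def numeral_eq_Suc algebra_simps)

lemma ncont_casoratian: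
  assumes nz: "\<And>k. y k \<noteq> 0"
  shows "ncont y a (k + 3) * ncont y (a + 2) k - ncont y a (k + 2) * ncont y (a + 2) (k + 1)
    = (-1) ^ k * y (a + int k + 1)"
proof (induction k)
  case 0
  show ?case using nz by (simp add: ncont_2 ncont_3 add.commute)
next
  case (Suc k)
  let ?x = "\<lambda>n. ncont y a (n + 2)" and ?z = "ncont y (a + 2)"
  have "?x (Suc (Suc k)) * ?z (Suc k) - ?x (Suc k) * ?z (Suc (Suc k))
      = - (y (a + int k + 2) / y (a + int k + 1)) * (?x (Suc k) * ?z k - ?x k * ?z (Suc k))"
    by (rule casoratian_Suc[where p = "\<lambda>n. inverse (y (a + int n + 1))"]) (fact ncont_shifted_recurrences)+
  also have "?x (Suc k) * ?z k - ?x k * ?z (Suc k) = (-1) ^ k * y (a + int k + 1)"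
    using Suc.IH by (simp add: numeral_eq_Suc)
  finally show ?case using nz[of "a + int k + 1"] by (simp add: numeral_eq_Suc algebra_simps)
qed

lemma ncont_exchange:
  assumes nz: "\<And>k. y k \<noteq> 0"
  shows "ncont y a (k + 4) * ncont y (a + 2) k - ncont y a (k + 2) * ncont y (a + 2) (k + 2) = (-1) ^ k"
proof -
  let ?x = "\<lambda>n. ncont y a (n + 2)" and ?z = "ncont y (a + 2)"
  have "?x (Suc (Suc k)) * ?z k - ?x k * ?z (Suc (Suc k))
      = inverse (y (a + int k + 1)) * (?x (Suc k) * ?z k - ?x k * ?z (Suc k))"
    by (rule casoratian_skip[where q = "\<lambda>n. y (a + int n + 2) / y (a + int n + 1)"])
      (fact ncont_shifted_recurrences)+
  also have "?x (Suc k) * ?z k - ?x k * ?z (Suc k) = (-1) ^ k * y (a + int k + 1)"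
    using ncont_casoratian[OF nz] by (simp add: numeral_eq_Suc)
  finally show ?thesis using nz[of "a + int k + 1"] by (simp add: numeral_eq_Suc)
qed

lemma ysh_eq_ncont:
  "(\<And>i n. ysh y i n \<noteq> 0) \<Longrightarrow> ysh y i n = ncont y (i - int n + 1) (2 * n)"
proof (induction y i n rule: ysh.induct)
  case (1 y i)
  then show ?case by simp
next
  case (2 y i)
  then show ?case using "2.prems"[of _ 0] by (simp add: ncont_2)
next
  case (3 y i n)
  have nz: "y k \<noteq> 0" for k using "3.prems"[of k 0] by simp
  define a where "a = i - int n - 1"
  have "ysh y i (Suc (Suc n)) = (ncont y a (2 * n + 2) * ncont y (a + 2) (2 * n + 2) + 1) / ncont y (a + 2) (2 * n)"
    using 3 by (simp add: a_def algebra_simps)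
  also have "\<dots> = ncont y a (2 * n + 4)"
    using ncont_exchange[where a = a and k = "2 * n", OF nz] "3.prems"[of i n] "3.IH"(3)[OF "3.prems"]
    by (simp add: a_def field_simps)
  also have "\<dots> = ncont y (i - int (Suc (Suc n)) + 1) (2 * Suc (Suc n))"
    by (rule arg_cong2[where f = "ncont y"]) (simp_all add: a_def)
  finally show ?case .
qed

lemma ncont_eq_ladder_P:
  assumes nz: "\<And>k. y k \<noteq> 0"
  shows "ncont y a (m + 3) * (\<Prod>k\<in>{1..m}. y (a + int k))
    = ladder_P m (\<lambda>k. y (a + int k + 1)) (\<lambda>k. y (a + int k - 1))"
proof (rule second_order_recurrence_unique[where p = "\<lambda>_. 1" and q = "\<lambda>m. y (a + int m + 3) * y (a + int m + 1)"])
  let ?A = "\<lambda>k. y (a + int k + 1)" and ?B = "\<lambda>k. y (a + int k - 1)"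
  let ?D = "\<lambda>m. \<Prod>k\<in>{1..m}. y (a + int k)"
  have D_Suc: "?D (Suc m) = ?D m * y (a + int m + 1)" for m
    by (simp add: prod.nat_ivl_Suc' add_ac)
  show "ncont y a (0 + 3) * ?D 0 = ladder_P 0 ?A ?B"
    using nz by (simp add: ncont_3 ladder_P_0)
  show "ncont y a (1 + 3) * ?D 1 = ladder_P 1 ?A ?B"
    using nz ladder_P_1[of ?A ?B] by (simp add: ncont_4 add_ac)
  show "ncont y a (Suc (Suc m) + 3) * ?D (Suc (Suc m))
      = 1 * (ncont y a (Suc m + 3) * ?D (Suc m)) + y (a + int m + 3) * y (a + int m + 1) * (ncont y a (m + 3) * ?D m)"
    for m
  proof -
    have rec: "ncont y a (Suc (Suc m) + 3) * y (a + int m + 2)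
        = ncont y a (Suc m + 3) + y (a + int m + 3) * ncont y a (m + 3)"
      using ncont.simps(3)[of y a "m + 3"] nz[of "a + int m + 2"] by (simp add: field_simps)
    have "ncont y a (Suc (Suc m) + 3) * ?D (Suc (Suc m))
        = (ncont y a (Suc (Suc m) + 3) * y (a + int m + 2)) * (?D m * y (a + int m + 1))"
      by (simp add: D_Suc algebra_simps)
    also have "\<dots> = (ncont y a (Suc m + 3) + y (a + int m + 3) * ncont y a (m + 3)) * (?D m * y (a + int m + 1))"
      by (simp only: rec)
    finally show ?thesis by (simp add: D_Suc algebra_simps)
  qed
  show "ladder_P (Suc (Suc m)) ?A ?B
      = 1 * ladder_P (Suc m) ?A ?B + y (a + int m + 3) * y (a + int m + 1) * ladder_P m ?A ?B" for m
    by (simp add: ladder_P_Suc_Suc algebra_simps)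
qed

theorem lemma2:
  fixes y :: "int \<Rightarrow> 'a::field"
  assumes nonzero: "\<And>i n. ysh y i n \<noteq> 0"
  assumes j: "j \<ge> (1::nat)"
  shows "ysh y i (j + 1) =
    ladder_P (2 * j - 1) (\<lambda>k. y (i - int j + int k + 1)) (\<lambda>k. y (i - int j + int k - 1))
    / (\<Prod>k\<in>{1..2 * j - 1}. y (i - int j + int k))"
proof -
  have nz: "y k \<noteq> 0" for k
    using nonzero[of k 0] by simp
  have "ysh y i (j + 1) = ncont y (i - int (j + 1) + 1) (2 * (j + 1))"
    using nonzero by (rule ysh_eq_ncont)
  also have "\<dots> = ncont y (i - int j) (2 * j - 1 + 3)"
    by (rule arg_cong2[where f = "ncont y"]) (use j in simp_all)
  also have "\<dots> = ladder_P (2 * j - 1) (\<lambda>k. y (i - int j + int k + 1)) (\<lambda>k. y (i - int j + int k - 1))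
    / (\<Prod>k\<in>{1..2 * j - 1}. y (i - int j + int k))"
    using ncont_eq_ladder_P[OF nz] nz by (simp add: eq_divide_eq)
  finally show ?thesis .
qed

end
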